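(* Let $p\ge0$. There is a constant $C_p<\infty$ such that for all $0\le a<b$ and all $u\in H^1(a,b)$ with $u(b)=0$, $$\int_a^b\Big(\frac{u(x)}{b-x}\Big)^2x^p\,dx\le C_p\int_a^b (u'(x))^2x^p\,dx.$$
   Context: $C_p$ depends only on $p$, not on $a$, $b$ or $u$. *)

theory Defs
  imports "HOL-Analysis.Analysis"
begin

text \<open>A function u on [a,b] belongs to H^1(a,b) (continuous representative) with weak
  derivative u': u' is square integrable on [a,b] and u is the indefinite integral of u'.\<close>
definition H1_on :: "real \<Rightarrow> real \<Rightarrow> (real \<Rightarrow> real) \<Rightarrow> (real \<Rightarrow> real) \<Rightarrow> bool" where
  "H1_on a b u u' \<longleftrightarrow>
     set_integrable lborel {a..b} u' \<and>
     set_integrable lborel {a..b} (\<lambda>x. (u' x)\<^sup>2) \<and>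
     (\<forall>x\<in>{a..b}. u x = u a + (LBINT t=a..x. u' t))"

end

theory Submission
  imports Defs
begin

text \<open>The constant is \<open>C\<^sub>p = 4\<close>. Put \<open>F x = u x * x powr (p/2)\<close> and
  \<open>G t = \<bar>u' t\<bar> * t powr (p/2)\<close>. Since \<open>u b = 0\<close> and \<open>t powr (p/2)\<close> is nondecreasing
  on \<open>[0, \<infinity>)\<close>, \<open>\<bar>F x\<bar> \<le> \<integral>\<^sub>x\<^sup>b G\<close>, so it suffices to prove the tail form of Hardy's
  inequality \<open>\<integral>\<^sub>a\<^sup>b (F x / (b - x))\<^sup>2 \<le> 4 \<integral>\<^sub>a\<^sup>b G\<^sup>2\<close>. Cauchy--Schwarz with the weight
  \<open>(b - t) powr (1/4)\<close> gives \<open>(\<integral>\<^sub>x\<^sup>b G)\<^sup>2 \<le> 2 sqrt (b - x) \<integral>\<^sub>x\<^sup>b G\<^sup>2 sqrt (b - t)\<close>; dividing by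
  \<open>(b - x)\<^sup>2\<close>, integrating in \<open>x\<close> and exchanging the order of integration, the inner
  integral \<open>\<integral>\<^sub>a\<^sup>t 2 (b - x) powr (-3/2) dx \<le> 4 / sqrt (b - t)\<close> cancels the weight.\<close>

lemma nn_integral_inverse_sqrt_le:
  assumes "x \<le> b"
  shows "(\<integral>\<^sup>+t\<in>{x<..<b}. ennreal (1 / sqrt (b - t)) \<partial>lborel) \<le> ennreal (2 * sqrt (b - x))"
proof -
  have "((\<lambda>t. 1 / sqrt (b - t)) has_integral (-2 * sqrt (b - b)) - (-2 * sqrt (b - x))) {x..b}"
  proof (rule fundamental_theorem_of_calculus_interior)
    show "continuous_on {x..b} (\<lambda>t. -2 * sqrt (b - t))"
      by (intro continuous_intros)
    fix t assume t: "t \<in> {x<..<b}"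
    have "((\<lambda>t. -2 * sqrt (b - t)) has_real_derivative (inverse (sqrt (b - t)))) (at t)"
      using t by (auto intro!: derivative_eq_intros)
    then show "((\<lambda>t. -2 * sqrt (b - t)) has_vector_derivative 1 / sqrt (b - t)) (at t)"
      by (simp add: has_real_derivative_iff_has_vector_derivative divide_inverse)
  qed (use assms in simp)
  then have "(\<integral>\<^sup>+t\<in>{x..b}. ennreal (1 / sqrt (b - t)) \<partial>lborel) = ennreal (2 * sqrt (b - x))"
    by (subst nn_integral_has_integral_lebesgue') auto
  moreover have "(\<integral>\<^sup>+t\<in>{x<..<b}. ennreal (1 / sqrt (b - t)) \<partial>lborel)
      \<le> (\<integral>\<^sup>+t\<in>{x..b}. ennreal (1 / sqrt (b - t)) \<partial>lborel)"
    by (intro nn_integral_mono) (simp split: split_indicator)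
  ultimately show ?thesis by simp
qed

lemma nn_integral_powr_neg_three_halves_le:
  assumes "a \<le> t" "t < b"
  shows "(\<integral>\<^sup>+s\<in>{a..<t}. ennreal ((b - s) powr (-3/2)) \<partial>lborel) \<le> ennreal (2 * (b - t) powr (-1/2))"
proof -
  have FTC: "((\<lambda>s. (b - s) powr (-3/2)) has_integral 2 * (b - t) powr (-1/2) - 2 * (b - a) powr (-1/2)) {a..t}"
  proof (rule fundamental_theorem_of_calculus_interior)
    show "continuous_on {a..t} (\<lambda>s. 2 * (b - s) powr (-1/2))"
      using assms by (intro continuous_intros) auto
    fix s assume s: "s \<in> {a<..<t}"
    have "((\<lambda>s. 2 * (b - s) powr (-1/2)) has_real_derivative 2 * ((-1/2) * (b - s) powr (-1/2 - 1) * (0 - 1))) (at s)"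
      using s assms by (intro derivative_eq_intros) auto
    then show "((\<lambda>s. 2 * (b - s) powr (-1/2)) has_vector_derivative (b - s) powr (-3/2)) (at s)"
      by (simp add: has_real_derivative_iff_has_vector_derivative)
  qed (use assms in simp)
  have "(\<integral>\<^sup>+s\<in>{a..<t}. ennreal ((b - s) powr (-3/2)) \<partial>lborel)
      \<le> (\<integral>\<^sup>+s\<in>{a..t}. ennreal ((b - s) powr (-3/2)) \<partial>lborel)"
    by (intro nn_integral_mono) (simp split: split_indicator)
  also have "\<dots> = ennreal (2 * (b - t) powr (-1/2) - 2 * (b - a) powr (-1/2))"
    using FTC by (subst nn_integral_has_integral_lebesgue') auto
  also have "\<dots> \<le> ennreal (2 * (b - t) powr (-1/2))"
    by (intro ennreal_leI) simp
  finally show ?thesis .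
qed

lemma Cauchy_Schwarz_nn_integral_weighted:
  fixes f w :: "'a \<Rightarrow> real"
  assumes [measurable]: "f \<in> borel_measurable M" "w \<in> borel_measurable M" "A \<in> sets M"
    and w_pos: "\<And>x. x \<in> A \<Longrightarrow> 0 < w x"
  shows "(\<integral>\<^sup>+x\<in>A. ennreal (f x) \<partial>M)\<^sup>2
    \<le> (\<integral>\<^sup>+x\<in>A. ennreal ((f x)\<^sup>2 * w x) \<partial>M) * (\<integral>\<^sup>+x\<in>A. ennreal (1 / w x) \<partial>M)"
proof -
  define g where "g x = ennreal (\<bar>f x\<bar> * sqrt (w x)) * indicator A x" for x
  define h where "h x = ennreal (1 / sqrt (w x)) * indicator A x" for x
  have [measurable]: "g \<in> borel_measurable M" "h \<in> borel_measurable M"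
    unfolding g_def h_def by measurable
  have "ennreal (f x) * indicator A x \<le> g x * h x" for x
  proof (cases "x \<in> A")
    case True
    then have "\<bar>f x\<bar> * sqrt (w x) * (1 / sqrt (w x)) = \<bar>f x\<bar>"
      using w_pos[OF True] by simp
    moreover have "g x * h x = ennreal (\<bar>f x\<bar> * sqrt (w x) * (1 / sqrt (w x)))"
      using True w_pos[OF True] unfolding g_def h_def by (subst ennreal_mult) auto
    ultimately show ?thesis using True by (simp add: ennreal_leI)
  qed (simp add: g_def h_def)
  then have "(\<integral>\<^sup>+x\<in>A. ennreal (f x) \<partial>M)\<^sup>2 \<le> (\<integral>\<^sup>+x. g x * h x \<partial>M)\<^sup>2"
    by (intro power_mono nn_integral_mono) auto
  also have "\<dots> \<le> (\<integral>\<^sup>+x. (g x)\<^sup>2 \<partial>M) * (\<integral>\<^sup>+x. (h x)\<^sup>2 \<partial>M)"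
    by (rule Cauchy_Schwarz_nn_integral) measurable
  also have "(\<lambda>x. (g x)\<^sup>2) = (\<lambda>x. ennreal ((f x)\<^sup>2 * w x) * indicator A x)"
  proof
    fix x
    show "(g x)\<^sup>2 = ennreal ((f x)\<^sup>2 * w x) * indicator A x"
    proof (cases "x \<in> A")
      case True
      have "(\<bar>f x\<bar> * sqrt (w x))\<^sup>2 = (f x)\<^sup>2 * w x"
        using w_pos[OF True] by (simp add: power_mult_distrib)
      then show ?thesis
        using True w_pos[OF True] by (simp add: g_def ennreal_power)
    qed (simp add: g_def)
  qed
  also have "(\<lambda>x. (h x)\<^sup>2) = (\<lambda>x. ennreal (1 / w x) * indicator A x)"
  proof
    fix x
    show "(h x)\<^sup>2 = ennreal (1 / w x) * indicator A x"
    proof (cases "x \<in> A")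
      case True
      then show ?thesis
        using True w_pos[OF True] by (simp add: h_def ennreal_power power_divide)
    qed (simp add: h_def)
  qed
  finally show ?thesis .
qed

lemma tail_nn_integral_sq_le:
  fixes G :: "real \<Rightarrow> real"
  assumes "G \<in> borel_measurable borel" and "x \<le> b"
  shows "(\<integral>\<^sup>+t\<in>{x<..<b}. ennreal (G t) \<partial>lborel)\<^sup>2
    \<le> ennreal (2 * sqrt (b - x)) * (\<integral>\<^sup>+t\<in>{x<..<b}. ennreal ((G t)\<^sup>2 * sqrt (b - t)) \<partial>lborel)"
proof -
  have "(\<integral>\<^sup>+t\<in>{x<..<b}. ennreal (G t) \<partial>lborel)\<^sup>2
    \<le> (\<integral>\<^sup>+t\<in>{x<..<b}. ennreal ((G t)\<^sup>2 * sqrt (b - t)) \<partial>lborel) * (\<integral>\<^sup>+t\<in>{x<..<b}. ennreal (1 / sqrt (b - t)) \<partial>lborel)"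
    using assms(1) by (intro Cauchy_Schwarz_nn_integral_weighted) auto
  also have "\<dots> \<le> (\<integral>\<^sup>+t\<in>{x<..<b}. ennreal ((G t)\<^sup>2 * sqrt (b - t)) \<partial>lborel) * ennreal (2 * sqrt (b - x))"
    using assms(2) by (intro mult_left_mono nn_integral_inverse_sqrt_le) auto
  finally show ?thesis by (simp only: mult.commute)
qed

lemma nn_integral_triangle_swap:
  fixes k H :: "real \<Rightarrow> ennreal"
  assumes [measurable]: "k \<in> borel_measurable borel" "H \<in> borel_measurable borel"
  shows "(\<integral>\<^sup>+x\<in>{a..<b}. k x * (\<integral>\<^sup>+t\<in>{x<..<b}. H t \<partial>lborel) \<partial>lborel)
    = (\<integral>\<^sup>+t\<in>{a<..<b}. H t * (\<integral>\<^sup>+x\<in>{a..<t}. k x \<partial>lborel) \<partial>lborel)"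
proof -
  define K where "K x t = k x * H t * of_bool (a \<le> x \<and> x < t \<and> t < b)" for x t
  have K_meas: "(\<lambda>(x, t). K x t) \<in> borel_measurable (lborel \<Otimes>\<^sub>M lborel)"
    unfolding K_def
    by (subst measurable_cong_sets[OF sets_pair_measure_cong[OF sets_lborel sets_lborel] refl]) measurable
  have "K x t = (k x * indicator {a..<b} x) * (H t * indicator {x<..<b} t)" for x t
    by (auto simp: K_def split: split_indicator)
  then have inner_t: "(\<integral>\<^sup>+t. K x t \<partial>lborel) = k x * indicator {a..<b} x * (\<integral>\<^sup>+t\<in>{x<..<b}. H t \<partial>lborel)" for x
    by (simp only:) (rule nn_integral_cmult, measurable)
  have "K x t = (H t * indicator {a<..<b} t) * (k x * indicator {a..<t} x)" for x t
    by (auto simp: K_def mult.commute split: split_indicator)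
  then have inner_x: "(\<integral>\<^sup>+x. K x t \<partial>lborel) = H t * indicator {a<..<b} t * (\<integral>\<^sup>+x\<in>{a..<t}. k x \<partial>lborel)" for t
    by (simp only:) (rule nn_integral_cmult, measurable)
  have "(\<integral>\<^sup>+x\<in>{a..<b}. k x * (\<integral>\<^sup>+t\<in>{x<..<b}. H t \<partial>lborel) \<partial>lborel)
      = (\<integral>\<^sup>+x. (\<integral>\<^sup>+t. K x t \<partial>lborel) \<partial>lborel)"
    unfolding inner_t by (simp only: mult_ac)
  also have "\<dots> = (\<integral>\<^sup>+t. (\<integral>\<^sup>+x. K x t \<partial>lborel) \<partial>lborel)"
    using lborel_pair.Fubini'[OF K_meas] by simp
  also have "\<dots> = (\<integral>\<^sup>+t\<in>{a<..<b}. H t * (\<integral>\<^sup>+x\<in>{a..<t}. k x \<partial>lborel) \<partial>lborel)"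
    unfolding inner_x by (simp only: mult_ac)
  finally show ?thesis .
qed

lemma Hardy_tail_pointwise_le:
  fixes F G :: "real \<Rightarrow> real"
  assumes G_meas: "G \<in> borel_measurable borel" and x: "x < b"
    and F_le: "ennreal \<bar>F x\<bar> \<le> (\<integral>\<^sup>+t\<in>{x<..<b}. ennreal (G t) \<partial>lborel)"
  shows "ennreal ((F x / (b - x))\<^sup>2)
    \<le> ennreal (2 * (b - x) powr (-3/2)) * (\<integral>\<^sup>+t\<in>{x<..<b}. ennreal ((G t)\<^sup>2 * sqrt (b - t)) \<partial>lborel)"
proof -
  define J where "J = (\<integral>\<^sup>+t\<in>{x<..<b}. ennreal ((G t)\<^sup>2 * sqrt (b - t)) \<partial>lborel)"
  have "(b - x) powr (-3/2) = (b - x) powr (1/2) / (b - x) powr 2"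
    by (simp add: powr_diff[symmetric])
  then have weight: "1 / (b - x)\<^sup>2 * (2 * sqrt (b - x)) = 2 * (b - x) powr (-3/2)"
    using x by (simp add: powr_half_sqrt powr_numeral)
  have "ennreal ((F x)\<^sup>2) = (ennreal \<bar>F x\<bar>)\<^sup>2"
    by (simp add: ennreal_power)
  also have "\<dots> \<le> (\<integral>\<^sup>+t\<in>{x<..<b}. ennreal (G t) \<partial>lborel)\<^sup>2"
    by (intro power_mono F_le) simp
  also have "\<dots> \<le> ennreal (2 * sqrt (b - x)) * J"
    unfolding J_def using x by (intro tail_nn_integral_sq_le G_meas) simp
  finally have "ennreal (1 / (b - x)\<^sup>2) * ennreal ((F x)\<^sup>2) \<le> ennreal (1 / (b - x)\<^sup>2) * (ennreal (2 * sqrt (b - x)) * J)"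
    by (rule mult_left_mono) simp
  also have "\<dots> = ennreal (1 / (b - x)\<^sup>2 * (2 * sqrt (b - x))) * J"
  proof -
    have "ennreal (1 / (b - x)\<^sup>2 * (2 * sqrt (b - x))) = ennreal (1 / (b - x)\<^sup>2) * ennreal (2 * sqrt (b - x))"
      using x by (intro ennreal_mult) auto
    then show ?thesis
      by (simp only: mult.assoc)
  qed
  also have "ennreal (1 / (b - x)\<^sup>2) * ennreal ((F x)\<^sup>2) = ennreal ((F x / (b - x))\<^sup>2)"
    by (simp add: ennreal_mult[symmetric] power_divide)
  finally show ?thesis
    unfolding weight J_def .
qed

lemma Hardy_inequality_tail:
  fixes F G :: "real \<Rightarrow> real"
  assumes G_meas: "G \<in> borel_measurable borel"
    and F_le: "\<And>x. x \<in> {a..<b} \<Longrightarrow> ennreal \<bar>F x\<bar> \<le> (\<integral>\<^sup>+t\<in>{x<..<b}. ennreal (G t) \<partial>lborel)"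
  shows "(\<integral>\<^sup>+x\<in>{a..<b}. ennreal ((F x / (b - x))\<^sup>2) \<partial>lborel)
    \<le> 4 * (\<integral>\<^sup>+t\<in>{a<..<b}. ennreal ((G t)\<^sup>2) \<partial>lborel)"
proof -
  define k where "k x = ennreal (2 * (b - x) powr (-3/2))" for x
  define H where "H t = ennreal ((G t)\<^sup>2 * sqrt (b - t))" for t
  have [measurable]: "k \<in> borel_measurable borel" "H \<in> borel_measurable borel"
    using G_meas unfolding k_def H_def by measurable
  have inner: "(\<integral>\<^sup>+x\<in>{a..<t}. k x \<partial>lborel) \<le> ennreal (4 / sqrt (b - t))"
    if t: "t \<in> {a<..<b}" for t
  proof -
    have "(\<integral>\<^sup>+x\<in>{a..<t}. k x \<partial>lborel) = 2 * (\<integral>\<^sup>+x\<in>{a..<t}. ennreal ((b - x) powr (-3/2)) \<partial>lborel)"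
      unfolding k_def by (subst nn_integral_cmult[symmetric]) (auto simp: ennreal_mult mult.assoc)
    also have "\<dots> \<le> 2 * ennreal (2 * (b - t) powr (-1/2))"
      using t by (intro mult_left_mono nn_integral_powr_neg_three_halves_le) auto
    also have "\<dots> = ennreal (2 * (2 * (b - t) powr (-1/2)))"
      by (simp add: ennreal_mult)
    also have "\<dots> = ennreal (4 / sqrt (b - t))"
      using t by (simp add: powr_minus_divide powr_half_sqrt)
    finally show ?thesis .
  qed
  have cancel: "H t * ennreal (4 / sqrt (b - t)) = 4 * ennreal ((G t)\<^sup>2)" if t: "t \<in> {a<..<b}" for t
  proof -
    have "H t * ennreal (4 / sqrt (b - t)) = ennreal ((G t)\<^sup>2 * sqrt (b - t) * (4 / sqrt (b - t)))"
      unfolding H_def using t by (intro ennreal_mult[symmetric]) auto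
    also have "(G t)\<^sup>2 * sqrt (b - t) * (4 / sqrt (b - t)) = 4 * (G t)\<^sup>2"
      using t by simp
    finally show ?thesis
      by (simp add: ennreal_mult)
  qed
  have "(\<integral>\<^sup>+x\<in>{a..<b}. ennreal ((F x / (b - x))\<^sup>2) \<partial>lborel)
      \<le> (\<integral>\<^sup>+x\<in>{a..<b}. k x * (\<integral>\<^sup>+t\<in>{x<..<b}. H t \<partial>lborel) \<partial>lborel)"
  proof (intro nn_integral_mono)
    fix x
    show "ennreal ((F x / (b - x))\<^sup>2) * indicator {a..<b} x
        \<le> k x * (\<integral>\<^sup>+t\<in>{x<..<b}. H t \<partial>lborel) * indicator {a..<b} x"
      using Hardy_tail_pointwise_le[OF G_meas _ F_le, where x = x] unfolding k_def H_def
      by (cases "x \<in> {a..<b}") auto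
  qed
  also have "\<dots> = (\<integral>\<^sup>+t\<in>{a<..<b}. H t * (\<integral>\<^sup>+x\<in>{a..<t}. k x \<partial>lborel) \<partial>lborel)"
    by (rule nn_integral_triangle_swap) measurable
  also have "\<dots> \<le> (\<integral>\<^sup>+t\<in>{a<..<b}. H t * ennreal (4 / sqrt (b - t)) \<partial>lborel)"
    using inner by (intro nn_integral_mono) (simp add: mult_left_mono split: split_indicator)
  also have "\<dots> = (\<integral>\<^sup>+t\<in>{a<..<b}. 4 * ennreal ((G t)\<^sup>2) \<partial>lborel)"
    using cancel by (intro nn_integral_cong) (simp split: split_indicator)
  also have "\<dots> = 4 * (\<integral>\<^sup>+t\<in>{a<..<b}. ennreal ((G t)\<^sup>2) \<partial>lborel)"
    using G_meas by (subst nn_integral_cmult[symmetric]) (auto simp: mult.assoc)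
  finally show ?thesis .
qed

lemma H1_on_abs_le_tail_integral:
  assumes H: "H1_on a b u u'" and ub: "u b = 0" and x: "x \<in> {a..<b}"
  shows "ennreal \<bar>u x\<bar> \<le> (\<integral>\<^sup>+t\<in>{x<..<b}. ennreal \<bar>u' t\<bar> \<partial>lborel)"
proof -
  have int: "set_integrable lborel {a..b} u'"
    and ftc: "\<And>y. y \<in> {a..b} \<Longrightarrow> u y = u a + (LBINT t=a..y. u' t)"
    using H unfolding H1_on_def by blast+
  have "interval_lebesgue_integrable lborel (ereal a) (ereal b) u'"
    using x by (auto simp: interval_lebesgue_integrable_def intro!: set_integrable_subset[OF int])
  moreover have "min (ereal a) (min (ereal x) (ereal b)) = ereal a"
    and "max (ereal a) (max (ereal x) (ereal b)) = ereal b"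
    using x by auto
  ultimately have "(LBINT t=a..x. u' t) + (LBINT t=x..b. u' t) = (LBINT t=a..b. u' t)"
    by (intro interval_integral_sum) simp
  with ftc[of x] ftc[of b] x ub have "u x = - (LBINT t=x..b. u' t)"
    by simp
  also have "(LBINT t=x..b. u' t) = (LBINT t:{x<..<b}. u' t)"
    using x by (simp add: interval_lebesgue_integral_le_eq)
  finally have "ennreal \<bar>u x\<bar> = ennreal (norm (LBINT t:{x<..<b}. u' t))"
    by simp
  also have "\<dots> \<le> (\<integral>\<^sup>+t. norm (indicator {x<..<b} t *\<^sub>R u' t) \<partial>lborel)"
    unfolding set_lebesgue_integral_def
  proof (rule integral_norm_bound_ennreal)
    have "set_integrable lborel {x<..<b} u'"
      using x by (intro set_integrable_subset[OF int]) auto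
    then show "integrable lborel (\<lambda>t. indicator {x<..<b} t *\<^sub>R u' t)"
      by (simp add: set_integrable_def)
  qed
  also have "\<dots> = (\<integral>\<^sup>+t\<in>{x<..<b}. ennreal \<bar>u' t\<bar> \<partial>lborel)"
    by (intro nn_integral_cong) (simp split: split_indicator)
  finally show ?thesis .
qed

lemma H1_on_weighted_abs_le_tail_integral:
  assumes p: "0 \<le> p" and a: "0 \<le> a" and H: "H1_on a b u u'" and ub: "u b = 0" and x: "x \<in> {a..<b}"
  shows "ennreal (\<bar>u x\<bar> * sqrt (x powr p)) \<le> (\<integral>\<^sup>+t\<in>{x<..<b}. ennreal (\<bar>u' t\<bar> * sqrt (t powr p)) \<partial>lborel)"
proof -
  define U where "U t = indicator {a..b} t * u' t" for t
  have "U \<in> borel_measurable lborel"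
    using H unfolding H1_on_def set_integrable_def U_def by (auto dest: borel_measurable_integrable)
  then have [measurable]: "U \<in> borel_measurable borel"
    by simp
  have on_tail: "t \<in> {x<..<b} \<Longrightarrow> U t = u' t" for t
    using x by (simp add: U_def)
  have "(\<integral>\<^sup>+t\<in>{x<..<b}. ennreal \<bar>u' t\<bar> \<partial>lborel) = (\<integral>\<^sup>+t\<in>{x<..<b}. ennreal \<bar>U t\<bar> \<partial>lborel)"
    using on_tail by (intro nn_integral_cong) (simp split: split_indicator)
  then have u_le: "ennreal \<bar>u x\<bar> \<le> (\<integral>\<^sup>+t\<in>{x<..<b}. ennreal \<bar>U t\<bar> \<partial>lborel)"
    using H1_on_abs_le_tail_integral[OF H ub x] by simp
  have "ennreal (\<bar>u x\<bar> * sqrt (x powr p)) = ennreal \<bar>u x\<bar> * ennreal (sqrt (x powr p))"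
    by (simp add: ennreal_mult)
  also have "\<dots> \<le> (\<integral>\<^sup>+t\<in>{x<..<b}. ennreal \<bar>U t\<bar> \<partial>lborel) * ennreal (sqrt (x powr p))"
    using u_le by (rule mult_right_mono) simp
  also have "\<dots> = (\<integral>\<^sup>+t\<in>{x<..<b}. ennreal (\<bar>U t\<bar> * sqrt (x powr p)) \<partial>lborel)"
    by (subst nn_integral_multc[symmetric]) (auto simp: ennreal_mult mult_ac intro!: nn_integral_cong)
  also have "\<dots> \<le> (\<integral>\<^sup>+t\<in>{x<..<b}. ennreal (\<bar>u' t\<bar> * sqrt (t powr p)) \<partial>lborel)"
  proof (intro nn_integral_mono)
    fix t
    have "t \<in> {x<..<b} \<Longrightarrow> x powr p \<le> t powr p"
      using x a p by (intro powr_mono2) auto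
    then show "ennreal (\<bar>U t\<bar> * sqrt (x powr p)) * indicator {x<..<b} t
        \<le> ennreal (\<bar>u' t\<bar> * sqrt (t powr p)) * indicator {x<..<b} t"
      using on_tail by (auto intro!: ennreal_leI mult_left_mono split: split_indicator)
  qed
  finally show ?thesis .
qed

lemma H1_on_weighted_Hardy:
  fixes p a b :: real and u u' :: "real \<Rightarrow> real"
  assumes p: "0 \<le> p" and a: "0 \<le> a" and H: "H1_on a b u u'" and ub: "u b = 0"
  shows "(\<integral>\<^sup>+x\<in>{a..b}. ennreal ((u x / (b - x))\<^sup>2 * x powr p) \<partial>lborel)
    \<le> 4 * (\<integral>\<^sup>+x\<in>{a..b}. ennreal ((u' x)\<^sup>2 * x powr p) \<partial>lborel)"
proof -
  define F where "F x = u x * sqrt (x powr p)" for x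
  define G where "G t = \<bar>indicator {a..b} t * u' t\<bar> * sqrt (t powr p)" for t
  have "(\<lambda>t. indicator {a..b} t * u' t) \<in> borel_measurable lborel"
    using H unfolding H1_on_def set_integrable_def by (auto dest: borel_measurable_integrable)
  then have G_meas: "G \<in> borel_measurable borel"
    unfolding G_def by simp
  have "ennreal \<bar>F x\<bar> \<le> (\<integral>\<^sup>+t\<in>{x<..<b}. ennreal (G t) \<partial>lborel)" if x: "x \<in> {a..<b}" for x
  proof -
    have "ennreal \<bar>F x\<bar> = ennreal (\<bar>u x\<bar> * sqrt (x powr p))"
      by (simp add: F_def abs_mult)
    also have "\<dots> \<le> (\<integral>\<^sup>+t\<in>{x<..<b}. ennreal (\<bar>u' t\<bar> * sqrt (t powr p)) \<partial>lborel)"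
      by (rule H1_on_weighted_abs_le_tail_integral[OF p a H ub x])
    also have "\<dots> = (\<integral>\<^sup>+t\<in>{x<..<b}. ennreal (G t) \<partial>lborel)"
      using x by (intro nn_integral_cong) (simp add: G_def split: split_indicator)
    finally show ?thesis .
  qed
  then have Hardy: "(\<integral>\<^sup>+x\<in>{a..<b}. ennreal ((F x / (b - x))\<^sup>2) \<partial>lborel)
      \<le> 4 * (\<integral>\<^sup>+t\<in>{a<..<b}. ennreal ((G t)\<^sup>2) \<partial>lborel)"
    using G_meas by (intro Hardy_inequality_tail)
  have "(\<integral>\<^sup>+x\<in>{a..b}. ennreal ((u x / (b - x))\<^sup>2 * x powr p) \<partial>lborel)
      = (\<integral>\<^sup>+x\<in>{a..<b}. ennreal ((F x / (b - x))\<^sup>2) \<partial>lborel)"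
    by (intro nn_integral_cong) (auto simp: F_def power_divide power_mult_distrib split: split_indicator)
  also have "\<dots> \<le> 4 * (\<integral>\<^sup>+t\<in>{a<..<b}. ennreal ((G t)\<^sup>2) \<partial>lborel)"
    by (rule Hardy)
  also have "\<dots> \<le> 4 * (\<integral>\<^sup>+x\<in>{a..b}. ennreal ((u' x)\<^sup>2 * x powr p) \<partial>lborel)"
    by (intro mult_left_mono nn_integral_mono) (auto simp: G_def power_mult_distrib split: split_indicator)
  finally show ?thesis .
qed

theorem lemma4p1:
  fixes p :: real
  assumes "p \<ge> 0"
  shows "\<exists>C::real. \<forall>a b (u::real\<Rightarrow>real) (u'::real\<Rightarrow>real).
           0 \<le> a \<and> a < b \<and> H1_on a b u u' \<and> u b = 0 \<longrightarrow>
           (\<integral>\<^sup>+ x\<in>{a..b}. ennreal ((u x / (b - x))\<^sup>2 * x powr p) \<partial>lborel)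
             \<le> ennreal C * (\<integral>\<^sup>+ x\<in>{a..b}. ennreal ((u' x)\<^sup>2 * x powr p) \<partial>lborel)"
  using H1_on_weighted_Hardy[OF assms] by (intro exI[of _ 4]) simp

end
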